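(* There exist absolute constants $0<c_1\le c_2$ and $c_3>0$ such that for every integer $N>20$ there is a weight $w\in A_1(\mathbb{R})$ satisfying: (1) $\int_0^1 w(x)\,dx=1$; (2) $c_1N\le [w]_{A_1}\le c_2N$; (3) $|\{x\in(1,\infty): w(x)>x\}|\ge c_3N^2$.
   Context: A weight $w\ge0$ on $\mathbb{R}$ is in $A_1$ if there is $C>0$ with $\frac1{|I|}\int_Iw\le C\operatorname{ess\,inf}_Iw$ for every interval $I$; $[w]_{A_1}$ is the smallest such $C$. $|E|$ is Lebesgue measure. *)

theory Defs
  imports "HOL-Analysis.Analysis"
begin

text \<open>Average of w over the interval [a,b] is at most C times the essential infimum of w
  on [a,b]; the latter is expressed as: the average is at most C * w x for almost every x in [a,b].\<close>
definition A1_bound :: "(real \<Rightarrow> real) \<Rightarrow> real \<Rightarrow> bool" where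
  "A1_bound w C \<longleftrightarrow>
     (\<forall>a b. a < b \<longrightarrow>
        set_integrable lborel {a..b} w \<and>
        (AE x in lborel. x \<in> {a..b} \<longrightarrow>
           (1 / (b - a)) * (LINT x:{a..b}|lborel. w x) \<le> C * w x))"

definition A1_weight :: "(real \<Rightarrow> real) \<Rightarrow> bool" where
  "A1_weight w \<longleftrightarrow> w \<in> borel_measurable lborel \<and> (\<forall>x. 0 \<le> w x) \<and> (\<exists>C>0. A1_bound w C)"

definition A1_const :: "(real \<Rightarrow> real) \<Rightarrow> real" where
  "A1_const w = Inf {C. C > 0 \<and> A1_bound w C}"

end

theory Submission
  imports Defs
begin

text \<open>The weight is $1$ plus $N$ bumps. The $k$-th bump has height $H_k = 2p_k$ on the plateau
  $[p_k, p_k + N]$, where $p_k = N 4^k$, and decays like $H_k/(1 + 8d)$ at distance $d$ from the plateau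
  until it reaches $1$. On each plateau $w(x) \ge 2p_k > x$, which gives a set of measure $N^2$.
  A single bump satisfies the $A_1$ condition with constant $20N$: averaging over its logarithmic
  tails only costs a factor $\ln H_k = O(N)$. For an interval $[a,b]$, the bumps with $p_k \le 2(b-a)/3$
  have total mass $O(N(b-a))$ since the $p_k$ grow geometrically, and at most one of the larger bumps
  meets $[a,b]$; hence $[w]_{A_1} \le 35N$. Conversely, $w = 1$ on $[0,1]$ while $w = 8N$ on the first
  plateau $[4N,5N]$, so averaging over $[0,5N]$ gives $[w]_{A_1} \ge N$.\<close>

section \<open>Bumps\<close>

definition plateau_dist :: "real \<Rightarrow> real \<Rightarrow> real \<Rightarrow> real" where
  "plateau_dist p L y = max 0 (max (p - y) (y - p - L))"

definition bump :: "real \<Rightarrow> real \<Rightarrow> real \<Rightarrow> real \<Rightarrow> real" where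
  "bump H p L y = max 1 (H / (1 + 8 * plateau_dist p L y))"

lemma plateau_dist_nonneg: "0 \<le> plateau_dist p L y"
  by (simp add: plateau_dist_def)

lemma plateau_dist_le_max:
  assumes "a \<le> x" "x \<le> b" "0 \<le> L"
  shows "plateau_dist p L x \<le> max (plateau_dist p L a) (plateau_dist p L b)"
  using assms unfolding plateau_dist_def by (auto simp: max_def)

lemma continuous_on_bump: "continuous_on S (bump H p L)"
  unfolding bump_def plateau_dist_def
  by (intro continuous_intros) (auto simp: max_def)

lemma integrable_bump: "bump H p L integrable_on {a..b}"
  by (rule integrable_continuous_interval[OF continuous_on_bump])

lemma bump_ge_1: "1 \<le> bump H p L y"
  by (simp add: bump_def)

lemma bump_antimono:
  assumes "plateau_dist p L x \<le> plateau_dist p L y" "0 \<le> H"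
  shows "bump H p L y \<le> bump H p L x"
proof -
  have "H / (1 + 8 * plateau_dist p L y) \<le> H / (1 + 8 * plateau_dist p L x)"
    using assms plateau_dist_nonneg[of p L x] by (intro divide_left_mono) auto
  then show ?thesis unfolding bump_def by linarith
qed

lemma bump_ge_min_endpoints:
  assumes "a \<le> x" "x \<le> b" "0 \<le> L" "0 \<le> H"
  shows "min (bump H p L a) (bump H p L b) \<le> bump H p L x"
  using plateau_dist_le_max[OF assms(1-3), of p] bump_antimono[OF _ assms(4)]
  by (metis max_def min.coboundedI1 min.coboundedI2)

lemma bump_reflect: "bump H p L (2 * p + L - y) = bump H p L y"
  unfolding bump_def plateau_dist_def by (simp add: algebra_simps max.commute)

lemma bump_eq_1_if_far:
  assumes "H - 1 \<le> 8 * plateau_dist p L y"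
  shows "bump H p L y = 1"
proof -
  have "H / (1 + 8 * plateau_dist p L y) \<le> 1"
    using assms plateau_dist_nonneg[of p L y] by (simp add: divide_le_eq)
  then show ?thesis unfolding bump_def by simp
qed

lemma bump_eq_1_left:
  assumes "y \<le> p - (H - 1) / 8" shows "bump H p L y = 1"
proof (rule bump_eq_1_if_far)
  have "p - y \<le> plateau_dist p L y" by (simp add: plateau_dist_def)
  then show "H - 1 \<le> 8 * plateau_dist p L y" using assms by (simp add: field_simps)
qed

lemma bump_eq_1_right:
  assumes "p + L + (H - 1) / 8 \<le> y" shows "bump H p L y = 1"
proof (rule bump_eq_1_if_far)
  have "y - p - L \<le> plateau_dist p L y" by (simp add: plateau_dist_def)
  then show "H - 1 \<le> 8 * plateau_dist p L y" using assms by (simp add: field_simps)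
qed

lemma bump_left_slope:
  assumes "p - (H - 1) / 8 \<le> y" "y \<le> p" "0 \<le> L"
  shows "bump H p L y = H / (1 + 8 * (p - y))"
proof -
  have "plateau_dist p L y = p - y" using assms unfolding plateau_dist_def by auto
  moreover have "1 \<le> H / (1 + 8 * (p - y))"
    using assms by (subst le_divide_eq) (auto simp: field_simps)
  ultimately show ?thesis unfolding bump_def by simp
qed

lemma bump_right_slope:
  assumes "p + L \<le> y" "y \<le> p + L + (H - 1) / 8" "0 \<le> L"
  shows "bump H p L y = H / (1 + 8 * (y - p - L))"
proof -
  have "plateau_dist p L y = y - p - L" using assms unfolding plateau_dist_def by auto
  moreover have "1 \<le> H / (1 + 8 * (y - p - L))"
    using assms by (subst le_divide_eq) (auto simp: field_simps)
  ultimately show ?thesis unfolding bump_def by simp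
qed

lemma bump_plateau:
  assumes "p \<le> y" "y \<le> p + L" "1 \<le> H"
  shows "bump H p L y = H"
proof -
  have "plateau_dist p L y = 0" using assms unfolding plateau_dist_def by auto
  then show ?thesis unfolding bump_def using assms by simp
qed

lemma integral_bump_eq_length:
  assumes "a \<le> b" "\<And>y. y \<in> {a..b} \<Longrightarrow> bump H p L y = 1"
  shows "integral {a..b} (bump H p L) = b - a"
proof -
  have "integral {a..b} (bump H p L) = integral {a..b} (\<lambda>_. 1)"
    using assms(2) by (rule integral_cong)
  then show ?thesis using assms(1) by simp
qed

lemma integral_bump_left_slope:
  assumes "p - (H - 1) / 8 \<le> a" "a \<le> b" "b \<le> p" "0 \<le> L" "1 \<le> H"
  shows "integral {a..b} (bump H p L) = H / 8 * (ln (1 + 8 * (p - a)) - ln (1 + 8 * (p - b)))"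
proof -
  let ?F = "\<lambda>s. - (H / 8) * ln (1 + 8 * (p - s))"
  have "((\<lambda>s. H / (1 + 8 * (p - s))) has_integral (?F b - ?F a)) {a..b}"
  proof (rule fundamental_theorem_of_calculus[OF assms(2)])
    fix x assume "x \<in> {a..b}"
    then have pos: "0 < 1 + 8 * (p - x)" using assms by auto
    show "(?F has_vector_derivative H / (1 + 8 * (p - x))) (at x within {a..b})"
      unfolding has_real_derivative_iff_has_vector_derivative[symmetric]
      by (rule derivative_eq_intros refl | use pos in force)+ (use pos in \<open>simp add: field_simps\<close>)
  qed
  then have "(bump H p L has_integral (?F b - ?F a)) {a..b}"
    by (rule has_integral_eq[rotated]) (use assms bump_left_slope in auto)
  then show ?thesis by (simp add: integral_unique algebra_simps)
qed

lemma integral_bump_right_slope: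
  assumes "p + L \<le> a" "a \<le> b" "b \<le> p + L + (H - 1) / 8" "0 \<le> L" "1 \<le> H"
  shows "integral {a..b} (bump H p L) = H / 8 * (ln (1 + 8 * (b - p - L)) - ln (1 + 8 * (a - p - L)))"
proof -
  let ?F = "\<lambda>s. (H / 8) * ln (1 + 8 * (s - p - L))"
  have "((\<lambda>s. H / (1 + 8 * (s - p - L))) has_integral (?F b - ?F a)) {a..b}"
  proof (rule fundamental_theorem_of_calculus[OF assms(2)])
    fix x assume "x \<in> {a..b}"
    then have pos: "0 < 1 + 8 * (x - p - L)" using assms by auto
    show "(?F has_vector_derivative H / (1 + 8 * (x - p - L))) (at x within {a..b})"
      unfolding has_real_derivative_iff_has_vector_derivative[symmetric]
      by (rule derivative_eq_intros refl | use pos in force)+ (use pos in \<open>simp add: field_simps\<close>)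
  qed
  then have "(bump H p L has_integral (?F b - ?F a)) {a..b}"
    by (rule has_integral_eq[rotated]) (use assms bump_right_slope in auto)
  then show ?thesis by (simp add: integral_unique algebra_simps)
qed

lemma integral_bump_plateau:
  assumes "p \<le> a" "a \<le> b" "b \<le> p + L" "1 \<le> H"
  shows "integral {a..b} (bump H p L) = H * (b - a)"
proof -
  have "integral {a..b} (bump H p L) = integral {a..b} (\<lambda>_. H)"
    by (rule integral_cong) (use assms bump_plateau in auto)
  then show ?thesis using assms by simp
qed

lemma mult_ln_diff_le:
  fixes A B M :: real
  assumes "1 \<le> B" "B \<le> A" "ln A \<le> M"
  shows "A * (ln A - ln B) \<le> (1 + M) * (A - B)"
proof -
  have "ln (A / B) \<le> A / B - 1" using assms by (intro ln_le_minus_one) auto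
  then have "B * ln (A / B) \<le> B * (A / B - 1)" using assms by (intro mult_left_mono) auto
  moreover have "ln (A / B) = ln A - ln B" "B * (A / B - 1) = A - B"
    using assms by (simp_all add: ln_div field_simps)
  ultimately have "B * (ln A - ln B) \<le> A - B" by simp
  moreover have "(A - B) * (ln A - ln B) \<le> (A - B) * M"
    using assms ln_ge_zero[of B] by (intro mult_left_mono) linarith+
  ultimately show ?thesis by (simp add: algebra_simps)
qed

lemma bump_left_slope_estimates:
  assumes "1 \<le> L" "1 \<le> H" "ln H \<le> 4 * L" "p - (H - 1) / 8 \<le> a" "a \<le> p"
  defines "A \<equiv> 1 + 8 * (p - a)"
  shows "bump H p L a = H / A" "1 \<le> A" "A \<le> H" "ln A \<le> 4 * L"
    and "A * ln A / 8 \<le> 5 * L * (p - a)"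
proof -
  show "bump H p L a = H / A" using bump_left_slope assms by simp
  show A1: "1 \<le> A" and "A \<le> H" using assms by (auto simp: field_simps)
  then show lnA: "ln A \<le> 4 * L" using assms(3) by (smt (verit) ln_le_cancel_iff)
  have "A * (ln A - ln 1) \<le> (1 + 4 * L) * (A - 1)" using A1 lnA by (intro mult_ln_diff_le) auto
  also have "\<dots> \<le> 5 * L * (A - 1)" using A1 assms(1) by (intro mult_right_mono) auto
  also have "\<dots> = 40 * L * (p - a)" by (simp add: A_def)
  finally show "A * ln A / 8 \<le> 5 * L * (p - a)" by simp
qed

lemma le_scaled_bump:
  assumes "1 \<le> L" "0 \<le> x"
  shows "x \<le> 20 * L * x * bump H p L y"
proof -
  have "1 * 1 \<le> 20 * L * bump H p L y"
    using assms bump_ge_1[of H p L y] by (intro mult_mono) auto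
  then have "x * 1 \<le> x * (20 * L * bump H p L y)"
    using assms(2) by (intro mult_left_mono) auto
  then show ?thesis by (simp add: ac_simps)
qed

lemma integral_bump_le_left_value_slope:
  assumes "1 \<le> L" "1 \<le> H" "ln H \<le> 4 * L" "p - (H - 1) / 8 \<le> a" "a < b" "b \<le> p"
  shows "integral {a..b} (bump H p L) \<le> 20 * L * (b - a) * bump H p L a"
proof -
  define A B where "A = 1 + 8 * (p - a)" and "B = 1 + 8 * (p - b)"
  have "a \<le> p" using assms by simp
  note slope = bump_left_slope_estimates[OF assms(1-4) this, folded A_def]
  have "1 \<le> B" "B \<le> A" using assms by (auto simp: A_def B_def)
  then have "A * (ln A - ln B) \<le> (1 + 4 * L) * (A - B)"
    using assms slope by (intro mult_ln_diff_le) auto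
  also have "\<dots> \<le> 20 * L * (A - B)"
    using \<open>B \<le> A\<close> assms(1) by (intro mult_right_mono) auto
  also have "\<dots> = 8 * (20 * L * (b - a))"
    by (simp add: A_def B_def algebra_simps)
  finally have "A * (ln A - ln B) / 8 \<le> 20 * L * (b - a)"
    by simp
  then have "H / A * (A * (ln A - ln B) / 8) \<le> H / A * (20 * L * (b - a))"
    using slope assms by (intro mult_left_mono) auto
  moreover have "integral {a..b} (bump H p L) = H / A * (A * (ln A - ln B) / 8)"
    using integral_bump_left_slope[of p H a b L] assms slope(2) by (simp add: A_def B_def)
  moreover have "H / A * (20 * L * (b - a)) = 20 * L * (b - a) * bump H p L a"
    using slope(1) by simp
  ultimately show ?thesis by simp
qed

lemma integral_bump_le_left_value_plateau:
  assumes "1 \<le> L" "1 \<le> H" "ln H \<le> 4 * L" "p - (H - 1) / 8 \<le> a" "a < p"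
    and "p < b" "b \<le> p + L"
  shows "integral {a..b} (bump H p L) \<le> 20 * L * (b - a) * bump H p L a"
proof -
  define A where "A = 1 + 8 * (p - a)"
  note slope = bump_left_slope_estimates[OF assms(1-4) less_imp_le[OF assms(5)], folded A_def]
  have "integral {a..b} (bump H p L) = integral {a..p} (bump H p L) + integral {p..b} (bump H p L)"
    using assms by (intro Henstock_Kurzweil_Integration.integral_combine[symmetric] integrable_bump) auto
  also have "\<dots> = H / 8 * ln A + H * (b - p)"
    using integral_bump_left_slope[of p H a p L] integral_bump_plateau[of p p b L H] assms
    by (simp add: A_def)
  also have "\<dots> = H / A * (A * ln A / 8 + A * (b - p))"
    using slope by (simp add: field_simps)
  also have "\<dots> \<le> H / A * (20 * L * (b - a))"
  proof (rule mult_left_mono)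
    define u v where "u = p - a" and "v = b - p"
    have "u * v \<le> L * u" "v \<le> L * v" "0 \<le> L * u" "0 \<le> L * v"
      using assms by (auto simp: u_def v_def mult.commute intro: mult_left_mono)
    moreover have "A * v = v + 8 * (u * v)" "20 * L * (b - a) = 20 * (L * u) + 20 * (L * v)"
      by (simp_all add: A_def u_def v_def algebra_simps)
    moreover have "A * ln A / 8 \<le> 5 * (L * u)" using slope(5) by (simp add: u_def)
    ultimately show "A * ln A / 8 + A * (b - p) \<le> 20 * L * (b - a)"
      unfolding v_def[symmetric] by linarith
  qed (use slope assms in simp)
  finally show ?thesis using slope(1) by (simp add: ac_simps)
qed

lemma integral_bump_le_left_value_tail:
  assumes "1 \<le> L" "1 \<le> H" "ln H \<le> 4 * L" "p - (H - 1) / 8 \<le> a" "a < p"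
    and "p + L < b" "b \<le> p + L + (H - 1) / 8"
  shows "integral {a..b} (bump H p L) \<le> 20 * L * (b - a) * bump H p L a"
proof -
  define A C where "A = 1 + 8 * (p - a)" and "C = 1 + 8 * (b - p - L)"
  note slope = bump_left_slope_estimates[OF assms(1-4) less_imp_le[OF assms(5)], folded A_def]
  have "1 \<le> C" "C \<le> H" using assms by (auto simp: C_def field_simps)
  then have lnC: "ln C \<le> 4 * L" using assms(3) by (smt (verit) ln_le_cancel_iff)
  have "integral {a..b} (bump H p L)
      = integral {a..p} (bump H p L) + integral {p..p + L} (bump H p L) + integral {p + L..b} (bump H p L)"
    using assms by (simp add: Henstock_Kurzweil_Integration.integral_combine integrable_bump)
  also have "\<dots> = H / 8 * ln A + H * L + H / 8 * ln C"
    using integral_bump_left_slope[of p H a p L] integral_bump_plateau[of p p "p + L" L H]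
      integral_bump_right_slope[of p L "p + L" b H] assms
    by (simp add: A_def C_def)
  also have "\<dots> = H / A * (A * ln A / 8 + A * L + A * ln C / 8)"
    using slope by (simp add: field_simps)
  also have "\<dots> \<le> H / A * (20 * L * (b - a))"
  proof (rule mult_left_mono)
    define u v where "u = p - a" and "v = b - p"
    have "A * ln C \<le> A * (4 * L)" using lnC slope by (intro mult_left_mono) auto
    moreover have "A * L = L + 8 * (L * u)" "A * (4 * L) = 4 * L + 32 * (L * u)"
      "20 * L * (b - a) = 20 * (L * u) + 20 * (L * v)"
      by (simp_all add: A_def u_def v_def algebra_simps)
    moreover have "L \<le> L * v" "0 \<le> L * u"
      using assms by (auto simp: u_def v_def intro: mult_left_le)
    moreover have "A * ln A / 8 \<le> 5 * (L * u)" using slope(5) by (simp add: u_def)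
    ultimately show "A * ln A / 8 + A * L + A * ln C / 8 \<le> 20 * L * (b - a)"
      using assms(1) by linarith
  qed (use slope assms in simp)
  finally show ?thesis using slope(1) by (simp add: ac_simps)
qed

lemma integral_bump_le_left_value_from_slope:
  assumes "1 \<le> L" "1 \<le> H" "ln H \<le> 4 * L" "p - (H - 1) / 8 \<le> a" "a < p" "a < b"
  shows "integral {a..b} (bump H p L) \<le> 20 * L * (b - a) * bump H p L a"
proof -
  define R where "R = p + L + (H - 1) / 8"
  have near: "integral {a..c} (bump H p L) \<le> 20 * L * (c - a) * bump H p L a"
    if "a < c" "c \<le> R" for c
  proof -
    consider "c \<le> p" | "p < c" "c \<le> p + L" | "p + L < c" by linarith
    then show ?thesis
      using integral_bump_le_left_value_slope integral_bump_le_left_value_plateau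
        integral_bump_le_left_value_tail assms that
      unfolding R_def by cases blast+
  qed
  show ?thesis
  proof (cases "b \<le> R")
    case True
    then show ?thesis using near assms by blast
  next
    case False
    have "a < R" using assms by (simp add: R_def)
    have "integral {a..b} (bump H p L) = integral {a..R} (bump H p L) + integral {R..b} (bump H p L)"
      using \<open>a < R\<close> False
      by (intro Henstock_Kurzweil_Integration.integral_combine[symmetric] integrable_bump) auto
    also have "integral {R..b} (bump H p L) = b - R"
      using False bump_eq_1_right by (intro integral_bump_eq_length) (auto simp: R_def)
    also have "b - R \<le> 20 * L * (b - R) * bump H p L a"
      using False assms by (intro le_scaled_bump) auto
    finally show ?thesis
      using near[OF \<open>a < R\<close>] by (simp add: algebra_simps)
  qed
qed

lemma integral_bump_le_left_value:
  assumes "1 \<le> L" "1 < H" "ln H \<le> 4 * L" "a < b"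
  shows "integral {a..b} (bump H p L) \<le> 20 * L * (b - a) * bump H p L a"
proof -
  define S where "S = p - (H - 1) / 8"
  consider "p \<le> a" | "S \<le> a" "a < p" | "a < S" by linarith
  then show ?thesis
  proof cases
    case 1
    have "integral {a..b} (bump H p L) \<le> integral {a..b} (\<lambda>_. bump H p L a)"
    proof (rule integral_le[OF integrable_bump])
      fix s assume "s \<in> {a..b}"
      then have "plateau_dist p L a \<le> plateau_dist p L s"
        using 1 unfolding plateau_dist_def by (auto simp: max_def)
      then show "bump H p L s \<le> bump H p L a" using bump_antimono assms by simp
    qed (intro integrable_continuous_interval continuous_on_const)
    also have "\<dots> = (b - a) * bump H p L a" using assms by simp
    also have "\<dots> \<le> 20 * L * (b - a) * bump H p L a"
      using assms bump_ge_1[of H p L a] by (intro mult_right_mono) auto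
    finally show ?thesis .
  next
    case 2
    then show ?thesis using integral_bump_le_left_value_from_slope assms S_def by simp
  next
    case 3
    have "bump H p L a = 1" using 3 bump_eq_1_left S_def by simp
    show ?thesis
    proof (cases "b \<le> S")
      case True
      then have "integral {a..b} (bump H p L) = b - a"
        using assms bump_eq_1_left by (intro integral_bump_eq_length) (auto simp: S_def)
      then show ?thesis using le_scaled_bump[of L "b - a"] assms by simp
    next
      case False
      have "integral {a..b} (bump H p L) = integral {a..S} (bump H p L) + integral {S..b} (bump H p L)"
        using 3 False
        by (intro Henstock_Kurzweil_Integration.integral_combine[symmetric] integrable_bump) auto
      also have "integral {a..S} (bump H p L) = S - a"
        using 3 bump_eq_1_left by (intro integral_bump_eq_length) (auto simp: S_def)
      also have "integral {S..b} (bump H p L) \<le> 20 * L * (b - S) * bump H p L S"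
        using False assms
        by (intro integral_bump_le_left_value_from_slope) (auto simp: S_def)
      also have "bump H p L S = 1" using bump_eq_1_left S_def by simp
      also have "S - a \<le> 20 * L * (S - a) * bump H p L a"
        using 3 assms by (intro le_scaled_bump) auto
      finally show ?thesis using \<open>bump H p L a = 1\<close> by (simp add: algebra_simps)
    qed
  qed
qed

lemma integral_reflect_shift_real:
  "integral {a..b} (\<lambda>s. f (c - s)) = integral {c - b..c - a} (f :: real \<Rightarrow> real)"
  using Henstock_Kurzweil_Integration.integral_reflect_real[of "-a" "-b" "f \<circ> (+) c"] integral_shift_Icc_real[of "-b" "-a" f c]
  by (simp add: o_def algebra_simps)

lemma integral_bump_le_right_value:
  assumes "1 \<le> L" "1 < H" "ln H \<le> 4 * L" "a < b"
  shows "integral {a..b} (bump H p L) \<le> 20 * L * (b - a) * bump H p L b"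
proof -
  have "integral {a..b} (bump H p L) = integral {a..b} (\<lambda>s. bump H p L (2 * p + L - s))"
    by (simp add: bump_reflect)
  also have "\<dots> = integral {2 * p + L - b..2 * p + L - a} (bump H p L)"
    by (rule integral_reflect_shift_real)
  also have "\<dots> \<le> 20 * L * ((2 * p + L - a) - (2 * p + L - b)) * bump H p L (2 * p + L - b)"
    using assms by (intro integral_bump_le_left_value) auto
  also have "\<dots> = 20 * L * (b - a) * bump H p L b"
    by (simp add: bump_reflect)
  finally show ?thesis .
qed

text \<open>Since the bump is unimodal, the bound at both endpoints gives the $A_1$ condition.\<close>
lemma integral_bump_le:
  assumes "1 \<le> L" "1 < H" "ln H \<le> 4 * L" "x \<in> {a..b}" "a < b"
  shows "integral {a..b} (bump H p L) \<le> 20 * L * (b - a) * bump H p L x"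
proof -
  have "integral {a..b} (bump H p L) \<le> 20 * L * (b - a) * min (bump H p L a) (bump H p L b)"
    using integral_bump_le_left_value[OF assms(1-3,5)] integral_bump_le_right_value[OF assms(1-3,5)]
    by (simp add: min_def)
  also have "\<dots> \<le> 20 * L * (b - a) * bump H p L x"
    using assms bump_ge_min_endpoints[of a x b L H p] by (intro mult_left_mono) auto
  finally show ?thesis .
qed

section \<open>The $A_1$ condition for continuous weights\<close>

lemma A1_bound_continuous:
  fixes w :: "real \<Rightarrow> real"
  assumes "continuous_on UNIV w"
    and "\<And>a b x. a < b \<Longrightarrow> x \<in> {a..b} \<Longrightarrow> integral {a..b} w \<le> C * (b - a) * w x"
  shows "A1_bound w C"
  unfolding A1_bound_def
proof (intro allI impI conjI)
  fix a b :: real assume "a < b"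
  show int: "set_integrable lborel {a..b} w"
    using assms(1) by (intro borel_integrable_atLeastAtMost') (rule continuous_on_subset, auto)
  show "AE x in lborel. x \<in> {a..b} \<longrightarrow> 1 / (b - a) * (LINT x:{a..b}|lborel. w x) \<le> C * w x"
  proof (intro AE_I2 impI)
    fix x assume "x \<in> {a..b}"
    then have "integral {a..b} w \<le> C * w x * (b - a)"
      using assms(2) \<open>a < b\<close> by (simp add: ac_simps)
    then have "integral {a..b} w / (b - a) \<le> C * w x"
      using \<open>a < b\<close> by (simp add: divide_le_eq)
    then show "1 / (b - a) * (LINT x:{a..b}|lborel. w x) \<le> C * w x"
      by (simp add: set_borel_integral_eq_integral(2)[OF int])
  qed
qed

lemma A1_const_le:
  assumes "A1_bound w C" "0 < C"
  shows "A1_const w \<le> C"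
  unfolding A1_const_def by (rule cInf_lower) (use assms in \<open>auto intro: bdd_belowI[of _ 0]\<close>)

lemma A1_const_ge:
  assumes "A1_bound w C" "0 < C" "\<And>C'. A1_bound w C' \<Longrightarrow> c \<le> C'"
  shows "c \<le> A1_const w"
  unfolding A1_const_def by (rule cInf_greatest) (use assms in auto)

lemma A1_bound_average_le:
  assumes "A1_bound w C" "a < b" "c < d" "{c..d} \<subseteq> {a..b}" "\<And>x. x \<in> {c..d} \<Longrightarrow> w x = v"
  shows "1 / (b - a) * (LINT x:{a..b}|lborel. w x) \<le> C * v"
proof (rule ccontr)
  assume contra: "\<not> ?thesis"
  have "AE x in lborel. x \<in> {a..b} \<longrightarrow> 1 / (b - a) * (LINT x:{a..b}|lborel. w x) \<le> C * w x"
    using assms(1,2) unfolding A1_bound_def by blast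
  then have "AE x in lborel. x \<notin> {c..d}"
    by eventually_elim (use assms(4,5) contra in auto)
  then have "emeasure lborel {c..d} = 0"
    by (subst (asm) AE_iff_measurable[of "{c..d}"]) auto
  then show False using assms(3) by simp
qed

section \<open>The weight\<close>

definition bump_pos :: "nat \<Rightarrow> nat \<Rightarrow> real" where
  "bump_pos N k = real N * 4 ^ k"

definition weight_term :: "nat \<Rightarrow> nat \<Rightarrow> real \<Rightarrow> real" where
  "weight_term N k y = bump (2 * bump_pos N k) (bump_pos N k) (real N) y - 1"

definition weight :: "nat \<Rightarrow> real \<Rightarrow> real" where
  "weight N y = 1 + (\<Sum>k\<in>{1..N}. weight_term N k y)"

lemma bump_pos_step: "k < k' \<Longrightarrow> 4 * bump_pos N k \<le> bump_pos N k'"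
proof -
  assume "k < k'"
  then have "(4::real) ^ Suc k \<le> 4 ^ k'" by (intro power_increasing) auto
  then have "real N * 4 ^ Suc k \<le> real N * 4 ^ k'" by (intro mult_left_mono) auto
  then show ?thesis unfolding bump_pos_def by (simp add: algebra_simps)
qed

lemma bump_pos_ge: "1 \<le> k \<Longrightarrow> 4 * real N \<le> bump_pos N k"
  using bump_pos_step[of 0 k N] by (simp add: bump_pos_def)

lemma sum_bump_pos_le:
  assumes "finite K" "\<And>k. k \<in> K \<Longrightarrow> bump_pos N k \<le> Y" "0 \<le> Y"
  shows "(\<Sum>k\<in>K. bump_pos N k) \<le> 4 / 3 * Y"
proof (cases "K = {}")
  case True
  then show ?thesis using assms by simp
next
  case False
  define m where "m = Max K"
  have "m \<in> K" "K \<subseteq> {..m}" using False assms m_def by auto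
  have "(\<Sum>k\<in>K. bump_pos N k) = real N * (\<Sum>k\<in>K. 4 ^ k)"
    by (simp add: bump_pos_def sum_distrib_left)
  also have "\<dots> \<le> real N * (\<Sum>k<Suc m. 4 ^ k)"
    using \<open>K \<subseteq> {..m}\<close> by (intro mult_left_mono sum_mono2) (auto simp: lessThan_Suc_atMost)
  also have "\<dots> = real N * ((4 ^ Suc m - 1) / 3)"
    by (simp add: geometric_sum)
  also have "\<dots> \<le> 4 / 3 * bump_pos N m"
    by (simp add: bump_pos_def field_simps)
  also have "\<dots> \<le> 4 / 3 * Y" using assms(2)[OF \<open>m \<in> K\<close>] by simp
  finally show ?thesis .
qed

lemma ln_bump_height_le:
  assumes "1 \<le> N" "k \<le> N"
  shows "ln (2 * bump_pos N k) \<le> 4 * real N"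
proof -
  have "ln (2 * bump_pos N k) = ln 2 + ln (real N) + real k * (2 * ln 2)"
    using assms ln_realpow[of 2 2] by (simp add: bump_pos_def ln_mult ln_realpow)
  moreover have "ln (real N) \<le> real N - 1" using assms by (intro ln_le_minus_one) auto
  moreover have "real k * ln 2 \<le> real N * 1"
    using assms ln_2_less_1 by (intro mult_mono) auto
  ultimately show ?thesis using ln_2_less_1 by simp
qed

lemma weight_term_nonneg: "0 \<le> weight_term N k y"
  using bump_ge_1 by (simp add: weight_term_def)

lemma continuous_on_weight_term: "continuous_on S (weight_term N k)"
  unfolding weight_term_def by (intro continuous_intros continuous_on_bump)

lemma continuous_on_weight: "continuous_on S (weight N)"
  unfolding weight_def by (intro continuous_intros continuous_on_weight_term)

lemma integrable_weight_term: "weight_term N k integrable_on {a..b}"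
  by (rule integrable_continuous_interval[OF continuous_on_weight_term])

lemma weight_ge_1: "1 \<le> weight N y"
  unfolding weight_def using weight_term_nonneg by (simp add: sum_nonneg)

lemma bump_le_weight:
  assumes "k \<in> {1..N}"
  shows "bump (2 * bump_pos N k) (bump_pos N k) (real N) y \<le> weight N y"
proof -
  have "weight_term N k y \<le> (\<Sum>k\<in>{1..N}. weight_term N k y)"
    using assms weight_term_nonneg by (intro member_le_sum) auto
  then show ?thesis unfolding weight_def weight_term_def by simp
qed

lemma weight_term_eq_0:
  assumes "1 \<le> k" "y < 3 * bump_pos N k / 4 \<or> 3 * bump_pos N k / 2 < y"
  shows "weight_term N k y = 0"
  using assms(2)
proof
  assume "y < 3 * bump_pos N k / 4"
  then have "bump (2 * bump_pos N k) (bump_pos N k) (real N) y = 1"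
    by (intro bump_eq_1_left) (simp add: field_simps)
  then show ?thesis by (simp add: weight_term_def)
next
  assume "3 * bump_pos N k / 2 < y"
  moreover have "4 * real N \<le> bump_pos N k" using bump_pos_ge assms(1) by simp
  ultimately have "bump (2 * bump_pos N k) (bump_pos N k) (real N) y = 1"
    by (intro bump_eq_1_right) (simp add: field_simps)
  then show ?thesis by (simp add: weight_term_def)
qed

lemma integral_weight_term_le:
  assumes "k \<in> {1..N}" "x \<in> {a..b}" "a < b"
  shows "integral {a..b} (weight_term N k) \<le> 20 * real N * (b - a) * weight N x"
proof -
  let ?B = "bump (2 * bump_pos N k) (bump_pos N k) (real N)"
  have "1 < 2 * bump_pos N k" using bump_pos_ge[of k N] assms by simp
  have "integral {a..b} (weight_term N k) \<le> integral {a..b} ?B"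
    by (rule integral_le[OF integrable_weight_term integrable_bump]) (simp add: weight_term_def)
  also have "\<dots> \<le> 20 * real N * (b - a) * ?B x"
    using assms ln_bump_height_le[of N k] \<open>1 < 2 * bump_pos N k\<close> by (intro integral_bump_le) auto
  also have "\<dots> \<le> 20 * real N * (b - a) * weight N x"
    using bump_le_weight[OF assms(1)] assms by (intro mult_left_mono) auto
  finally show ?thesis .
qed

lemma integral_weight_term_le_mass:
  assumes "k \<in> {1..N}"
  shows "integral {a..b} (weight_term N k) \<le> 15 * real N * bump_pos N k"
proof -
  let ?B = "bump (2 * bump_pos N k) (bump_pos N k) (real N)"
  define c d where "c = 3 * bump_pos N k / 4" and "d = 3 * bump_pos N k / 2"
  have "c < d" using bump_pos_ge[of k N] assms by (simp add: c_def d_def)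
  have "(weight_term N k has_integral integral {c..d} (weight_term N k)) {c..d}"
    using integrable_weight_term by blast
  then have on_UNIV: "(weight_term N k has_integral integral {c..d} (weight_term N k)) UNIV"
    by (rule has_integral_on_superset) (use weight_term_eq_0 assms in \<open>auto simp: c_def d_def\<close>)
  have "integral {a..b} (weight_term N k) \<le> integral UNIV (weight_term N k)"
    using on_UNIV weight_term_nonneg by (intro integral_subset_le integrable_weight_term) auto
  also have "\<dots> = integral {c..d} (weight_term N k)"
    using on_UNIV by (rule integral_unique)
  also have "\<dots> \<le> integral {c..d} ?B"
    by (rule integral_le[OF integrable_weight_term integrable_bump]) (simp add: weight_term_def)
  also have "\<dots> \<le> 20 * real N * (d - c) * ?B c"
    using assms ln_bump_height_le[of N k] bump_pos_ge[of k N] \<open>c < d\<close>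
    by (intro integral_bump_le_left_value) auto
  also have "?B c = 1"
    by (rule bump_eq_1_left) (simp add: c_def field_simps)
  also have "20 * real N * (d - c) * 1 = 15 * real N * bump_pos N k"
    by (simp add: c_def d_def)
  finally show ?thesis .
qed

lemma integral_weight_term_eq_0:
  assumes "1 \<le> k" "bump_pos N k < 2 * a / 3 \<or> 4 * b / 3 < bump_pos N k"
  shows "integral {a..b} (weight_term N k) = 0"
proof -
  have "integral {a..b} (weight_term N k) = integral {a..b} (\<lambda>_. 0)"
    using assms by (intro integral_cong weight_term_eq_0) auto
  then show ?thesis by simp
qed

lemma integral_weight:
  "integral {a..b} (weight N) = (b - a) + (\<Sum>k\<in>{1..N}. integral {a..b} (weight_term N k))"
  if "a \<le> b"
proof -
  have "integral {a..b} (weight N)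
      = integral {a..b} (\<lambda>_. 1) + integral {a..b} (\<lambda>y. \<Sum>k\<in>{1..N}. weight_term N k y)"
    unfolding weight_def
    by (rule integral_add) (auto intro!: integrable_continuous_interval continuous_intros continuous_on_weight_term)
  also have "integral {a..b} (\<lambda>y. \<Sum>k\<in>{1..N}. weight_term N k y)
      = (\<Sum>k\<in>{1..N}. integral {a..b} (weight_term N k))"
    by (rule integral_sum) (auto intro: integrable_weight_term)
  finally show ?thesis using that by simp
qed

lemma integral_weight_terms_small_le:
  assumes "K \<subseteq> {1..N}" "\<And>k. k \<in> K \<Longrightarrow> bump_pos N k \<le> Y" "0 \<le> Y"
  shows "(\<Sum>k\<in>K. integral {a..b} (weight_term N k)) \<le> 20 * real N * Y"
proof -
  have "finite K" using assms(1) finite_subset by blast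
  have "(\<Sum>k\<in>K. integral {a..b} (weight_term N k)) \<le> (\<Sum>k\<in>K. 15 * real N * bump_pos N k)"
    using assms(1) by (intro sum_mono integral_weight_term_le_mass) auto
  also have "\<dots> = 15 * real N * (\<Sum>k\<in>K. bump_pos N k)"
    by (simp add: sum_distrib_left)
  also have "\<dots> \<le> 15 * real N * (4 / 3 * Y)"
    using \<open>finite K\<close> assms by (intro mult_left_mono sum_bump_pos_le) auto
  finally show ?thesis by (simp add: ac_simps)
qed

lemma bump_pos_large_unique:
  assumes "\<forall>k\<in>{k1, k2}. 2 * a / 3 \<le> bump_pos N k \<and> bump_pos N k \<le> 4 * b / 3 \<and> 2 * (b - a) / 3 < bump_pos N k"
  shows "k1 = k2"
proof -
  have False if "k < k'" "k \<in> {k1, k2}" "k' \<in> {k1, k2}" for k k'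
  proof -
    have "4 * bump_pos N k \<le> bump_pos N k'" using bump_pos_step that(1) .
    then show False using assms that(2,3) by (auto simp: field_simps)
  qed
  then show ?thesis by (metis insertI1 insertI2 linorder_neqE_nat)
qed

text \<open>Terms with position at most $2(b-a)/3$ contribute $O(N(b-a))$ in total, being geometrically
  spaced; of the larger ones at most one has support meeting $[a,b]$.\<close>
lemma integral_weight_le:
  assumes "1 \<le> N" "x \<in> {a..b}" "a < b"
  shows "integral {a..b} (weight N) \<le> 35 * real N * (b - a) * weight N x"
proof -
  define I where "I k = integral {a..b} (weight_term N k)" for k
  define X where "X = real N * (b - a)"
  define Ks where "Ks = {k \<in> {1..N}. bump_pos N k \<le> 2 * (b - a) / 3}"
  define Kb where "Kb = {k \<in> {1..N} - Ks. 2 * a / 3 \<le> bump_pos N k \<and> bump_pos N k \<le> 4 * b / 3}"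
  have "integral {a..b} (weight N) = (b - a) + (\<Sum>k\<in>{1..N}. I k)"
    using integral_weight[of a b N] assms by (simp add: I_def)
  moreover have "(\<Sum>k\<in>{1..N}. I k) = (\<Sum>k\<in>{1..N} - Ks. I k) + (\<Sum>k\<in>Ks. I k)"
    by (rule sum.subset_diff) (auto simp: Ks_def)
  moreover have "(\<Sum>k\<in>{1..N} - Ks. I k) = (\<Sum>k\<in>Kb. I k)"
    by (intro sum.mono_neutral_right) (auto simp: Kb_def I_def intro!: integral_weight_term_eq_0)
  moreover have "(\<Sum>k\<in>Ks. I k) \<le> 20 * real N * (2 * (b - a) / 3)"
    unfolding I_def using assms by (intro integral_weight_terms_small_le) (auto simp: Ks_def)
  then have "(\<Sum>k\<in>Ks. I k) \<le> 40 / 3 * X"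
    by (simp add: X_def algebra_simps)
  moreover have "(\<Sum>k\<in>Kb. I k) \<le> 20 * (X * weight N x)"
  proof (cases "Kb = {}")
    case True
    then show ?thesis using assms weight_ge_1[of N x] by (simp add: X_def)
  next
    case False
    then obtain k where "k \<in> Kb" by blast
    have "k' = k" if "k' \<in> Kb" for k'
      using that \<open>k \<in> Kb\<close> by (intro bump_pos_large_unique[of k' k a N b]) (auto simp: Kb_def Ks_def)
    then have "Kb = {k}" using \<open>k \<in> Kb\<close> by blast
    moreover have "k \<in> {1..N}" using \<open>k \<in> Kb\<close> by (simp add: Kb_def)
    then have "I k \<le> 20 * real N * (b - a) * weight N x"
      unfolding I_def using assms by (intro integral_weight_term_le) auto
    ultimately show ?thesis by (simp add: X_def algebra_simps)
  qed
  moreover have "b - a \<le> X" "X \<le> X * weight N x"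
    using assms weight_ge_1[of N x] by (auto simp: X_def intro: mult_left_le)
  ultimately have "integral {a..b} (weight N) \<le> 35 * (X * weight N x)"
    using assms(3) by linarith
  then show ?thesis by (simp add: X_def)
qed

lemma A1_bound_weight: "1 \<le> N \<Longrightarrow> A1_bound (weight N) (35 * real N)"
  by (intro A1_bound_continuous continuous_on_weight integral_weight_le)

lemma A1_weight_weight:
  assumes "1 \<le> N"
  shows "A1_weight (weight N)"
proof -
  have "\<exists>C>0. A1_bound (weight N) C"
    using A1_bound_weight assms by (intro exI[of _ "35 * real N"]) auto
  then show ?thesis
    unfolding A1_weight_def using weight_ge_1 order_trans[OF zero_le_one]
    by (auto intro: borel_measurable_continuous_onI continuous_on_weight)
qed

lemma set_integral_weight: "(LINT x:{a..b}|lborel. weight N x) = integral {a..b} (weight N)"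
  by (intro set_borel_integral_eq_integral(2) borel_integrable_atLeastAtMost' continuous_on_weight)

lemma weight_eq_1:
  assumes "1 \<le> N" "y \<le> 1"
  shows "weight N y = 1"
proof -
  have "weight_term N k y = 0" if "k \<in> {1..N}" for k
    using bump_pos_ge[of k N] that assms by (intro weight_term_eq_0) auto
  then show ?thesis unfolding weight_def by simp
qed

lemma weight_ge_on_plateau:
  assumes "k \<in> {1..N}" "bump_pos N k \<le> y" "y \<le> bump_pos N k + real N"
  shows "2 * bump_pos N k \<le> weight N y"
proof -
  have "bump (2 * bump_pos N k) (bump_pos N k) (real N) y = 2 * bump_pos N k"
    using assms bump_pos_ge[of k N] by (intro bump_plateau) auto
  then show ?thesis using bump_le_weight[OF assms(1), of y] by simp
qed

lemma A1_bound_weight_ge: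
  assumes "1 \<le> N" "A1_bound (weight N) C"
  shows "real N \<le> C"
proof -
  define b where "b = 5 * real N"
  have "integral {4 * real N..b} (\<lambda>_. 8 * real N) \<le> integral {4 * real N..b} (weight N)"
    using weight_ge_on_plateau[of 1 N] assms
    by (intro integral_le integrable_continuous_interval continuous_intros continuous_on_weight)
      (auto simp: b_def bump_pos_def)
  also have "\<dots> \<le> integral {0..b} (weight N)"
    using assms order_trans[OF zero_le_one weight_ge_1]
    by (intro integral_subset_le integrable_continuous_interval continuous_on_weight) (auto simp: b_def)
  finally have "8 * real N * real N \<le> integral {0..b} (weight N)"
    by (simp add: b_def)
  moreover have "1 / (b - 0) * integral {0..b} (weight N) \<le> C * 1"
    using A1_bound_average_le[OF assms(2), of 0 b 0 1 1] weight_eq_1 assms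
    by (simp add: b_def set_integral_weight)
  then have "integral {0..b} (weight N) \<le> C * b"
    using assms by (simp add: b_def field_simps)
  ultimately have "real N * (8 * real N) \<le> real N * (5 * C)"
    by (simp add: b_def mult_ac)
  then have "8 * real N \<le> 5 * C" using assms by (simp add: mult_le_cancel_left_pos)
  then show ?thesis by linarith
qed

lemma emeasure_weight_gt_identity:
  assumes "1 \<le> N"
  shows "ennreal (real N ^ 2) \<le> emeasure lborel {x. 1 < x \<and> weight N x > x}"
proof -
  define F where "F k = {bump_pos N k..bump_pos N k + real N}" for k
  have "disjoint_family_on F {1..N}"
  proof -
    have "F k \<inter> F k' = {}" if "k < k'" "k \<in> {1..N}" for k k'
      using bump_pos_step[OF that(1), of N] bump_pos_ge[of k N] that assms by (auto simp: F_def)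
    then show ?thesis unfolding disjoint_family_on_def
      by (metis Int_commute linorder_neqE_nat)
  qed
  moreover have "F ` {1..N} \<subseteq> sets lborel" by (auto simp: F_def)
  ultimately have "emeasure lborel (\<Union>k\<in>{1..N}. F k) = (\<Sum>k\<in>{1..N}. emeasure lborel (F k))"
    by (intro sum_emeasure[symmetric]) auto
  also have "\<dots> = ennreal (real N ^ 2)"
    by (simp add: F_def power2_eq_square ennreal_mult' ennreal_of_nat_eq_real_of_nat)
  finally have "ennreal (real N ^ 2) = emeasure lborel (\<Union>k\<in>{1..N}. F k)" ..
  also have "\<dots> \<le> emeasure lborel {x. 1 < x \<and> weight N x > x}"
  proof (rule emeasure_mono)
    show "(\<Union>k\<in>{1..N}. F k) \<subseteq> {x. 1 < x \<and> weight N x > x}"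
    proof
      fix y assume "y \<in> (\<Union>k\<in>{1..N}. F k)"
      then obtain k where k: "k \<in> {1..N}" "bump_pos N k \<le> y" "y \<le> bump_pos N k + real N"
        by (auto simp: F_def)
      then have "2 * bump_pos N k \<le> weight N y" by (rule weight_ge_on_plateau)
      moreover have "4 * real N \<le> bump_pos N k" using bump_pos_ge k by simp
      ultimately show "y \<in> {x. 1 < x \<and> weight N x > x}" using k assms by simp
    qed
    have "open {x. 1 < x \<and> x < weight N x}"
      by (intro open_Collect_conj open_Collect_less continuous_intros continuous_on_weight)
    then show "{x. 1 < x \<and> weight N x > x} \<in> sets lborel" by simp
  qed
  finally show ?thesis .
qed

theorem theorem2p2:
  shows "\<exists>c1 c2 c3 :: real. 0 < c1 \<and> c1 \<le> c2 \<and> 0 < c3 \<and>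
    (\<forall>N :: nat. N > 20 \<longrightarrow>
      (\<exists>w :: real \<Rightarrow> real. A1_weight w \<and>
         (LINT x:{0..1}|lborel. w x) = 1 \<and>
         c1 * real N \<le> A1_const w \<and> A1_const w \<le> c2 * real N \<and>
         emeasure lborel {x. 1 < x \<and> w x > x} \<ge> ennreal (c3 * (real N)^2)))"
proof -
  have "\<exists>w. A1_weight w \<and> (LINT x:{0..1}|lborel. w x) = 1 \<and>
      1 * real N \<le> A1_const w \<and> A1_const w \<le> 35 * real N \<and>
      emeasure lborel {x. 1 < x \<and> w x > x} \<ge> ennreal (1 * (real N)^2)" if "N > 20" for N :: nat
  proof (intro exI[of _ "weight N"] conjI)
    have "1 \<le> N" using that by simp
    then show "A1_weight (weight N)" by (rule A1_weight_weight)
    note upper = A1_bound_weight[OF \<open>1 \<le> N\<close>]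
    have "integral {0..1} (weight N) = integral {0..1} (\<lambda>_ :: real. 1 :: real)"
      by (intro integral_cong) (use weight_eq_1[OF \<open>1 \<le> N\<close>] in auto)
    then show "(LINT x:{0..1}|lborel. weight N x) = 1"
      by (simp add: set_integral_weight)
    show "1 * real N \<le> A1_const (weight N)"
      using upper \<open>1 \<le> N\<close> A1_bound_weight_ge by (intro A1_const_ge) auto
    show "A1_const (weight N) \<le> 35 * real N"
      using upper \<open>1 \<le> N\<close> by (intro A1_const_le) auto
    show "ennreal (1 * (real N)\<^sup>2) \<le> emeasure lborel {x. 1 < x \<and> weight N x > x}"
      using emeasure_weight_gt_identity[OF \<open>1 \<le> N\<close>] by simp
  qed
  then show ?thesis by (intro exI[of _ 1] exI[of _ 35]) auto
qed

end
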